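(* For metric formulas $\psi,\varphi$, over strict timed traces, and for $n>0$: $\psi\,\mathsf{U}_{[n,n]}\,\varphi\equiv\psi\wedge\bigvee_{i=1}^n\bigcirc_{[i,i]}(\psi\,\mathsf{U}_{[n-i,n-i]}\,\varphi)$; $\psi\,\mathsf{R}_{[n,n]}\,\varphi\equiv\psi\vee\bigwedge_{i=1}^n\widehat{\bigcirc}_{[i,i]}(\psi\,\mathsf{R}_{[n-i,n-i]}\,\varphi)$; $\Diamond_{[n,n]}\varphi\equiv\bigvee_{i=1}^n\bigcirc_{[i,i]}\Diamond_{[n-i,n-i]}\varphi$; $\Box_{[n,n]}\varphi\equiv\bigwedge_{i=1}^n\widehat{\bigcirc}_{[i,i]}\Box_{[n-i,n-i]}\varphi$; and the same holds for the dual past operators (replacing $\mathsf{U},\mathsf{R},\bigcirc,\widehat{\bigcirc},\Diamond,\Box$ by $\mathsf{S},\mathsf{T},\bullet,\widehat{\bullet}$, eventually before ($\top\,\mathsf{S}\,\cdot$), $\blacksquare$, respectively).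
   Context: Metric formulas over $\mathcal{A}$: $\varphi ::= p \mid \bot \mid \varphi_1\otimes\varphi_2 \mid \bullet_I\varphi \mid \varphi_1\,\mathsf{S}_I\,\varphi_2 \mid \varphi_1\,\mathsf{T}_I\,\varphi_2 \mid \bigcirc_I\varphi \mid \varphi_1\,\mathsf{U}_I\,\varphi_2 \mid \varphi_1\,\mathsf{R}_I\,\varphi_2$, $\otimes\in\{\to,\wedge,\vee\}$, $I=[m,n)$; $[m,n]$ abbreviates $[m,n+1)$. Derived: $\neg\varphi=\varphi\to\bot$, $\top=\neg\bot$, $\blacksquare_I\varphi=\bot\,\mathsf{T}_I\,\varphi$, eventually before $=\top\,\mathsf{S}_I\,\varphi$, $\widehat{\bullet}_I\varphi=\bullet_I\varphi\vee\neg\bullet_I\top$, $\Box_I\varphi=\bot\,\mathsf{R}_I\,\varphi$, $\Diamond_I\varphi=\top\,\mathsf{U}_I\,\varphi$, $\widehat{\bigcirc}_I\varphi=\bigcirc_I\varphi\vee\neg\bigcirc_I\top$. Timed HT-trace $\mathbf{M}=(\langle\mathbf{H},\mathbf{T}\rangle,\tau)$ of length $\lambda$: $H_i\subseteq T_i\subseteq\mathcal{A}$, $\tau:[0,\lambda)\to\mathbb{N}$, $\tau(0)=0$; strict means $\tau(i)<\tau(i+1)$ whenever $i+1<\lambda$. Satisfaction at $k$: $\bot$ never; $p$ iff $p\in H_k$; $\wedge,\vee$ usual; $\varphi\to\psi$ iff for both $\mathbf{M}'=\mathbf{M}$ and $\mathbf{M}'=(\langle\mathbf{T},\mathbf{T}\rangle,\tau)$,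 $\mathbf{M}',k\not\models\varphi$ or $\mathbf{M}',k\models\psi$; $\bullet_I\varphi$: $k>0$, $\varphi$ at $k-1$, $\tau(k)-\tau(k-1)\in I$; $\varphi\,\mathsf{S}_I\,\psi$: some $j\in[0,k]$ with $\tau(k)-\tau(j)\in I$, $\psi$ at $j$, $\varphi$ at all $i\in(j,k]$; $\varphi\,\mathsf{T}_I\,\psi$: for all such $j$, $\psi$ at $j$ or $\varphi$ at some $i\in(j,k]$; $\bigcirc_I\varphi$: $k+1<\lambda$, $\varphi$ at $k+1$, $\tau(k+1)-\tau(k)\in I$; $\varphi\,\mathsf{U}_I\,\psi$: some $j\in[k,\lambda)$ with $\tau(j)-\tau(k)\in I$, $\psi$ at $j$, $\varphi$ at all $i\in[k,j)$; $\varphi\,\mathsf{R}_I\,\psi$: for all such $j$, $\psi$ at $j$ or $\varphi$ at some $i\in[k,j)$. $\varphi\equiv\psi$ means $\mathbf{M},k\models\varphi\leftrightarrow\psi$ for all (here: strict) timed HT-traces $\mathbf{M}$ and all $k$. *)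

theory Defs
  imports Main "HOL-Library.Extended_Nat"
begin

type_synonym interval = "nat \<times> enat"

definition in_int :: "nat \<Rightarrow> interval \<Rightarrow> bool" where
  "in_int d I \<longleftrightarrow> fst I \<le> d \<and> enat d < snd I"

text \<open>[m,n] abbreviates [m,n+1).\<close>
definition pt :: "nat \<Rightarrow> interval" where
  "pt n = (n, enat (Suc n))"

datatype 'a mform =
    Atom 'a
  | Bot
  | Impl "'a mform" "'a mform"
  | Conj "'a mform" "'a mform"
  | Disj "'a mform" "'a mform"
  | Prev interval "'a mform"
  | Since interval "'a mform" "'a mform"
  | Trigger interval "'a mform" "'a mform"
  | Next interval "'a mform"
  | Until interval "'a mform" "'a mform"
  | Release interval "'a mform" "'a mform"

definition Neg :: "'a mform \<Rightarrow> 'a mform" where "Neg \<phi> = Impl \<phi> Bot"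
definition Top :: "'a mform" where "Top = Neg Bot"
definition Iff :: "'a mform \<Rightarrow> 'a mform \<Rightarrow> 'a mform" where
  "Iff \<phi> \<psi> = Conj (Impl \<phi> \<psi>) (Impl \<psi> \<phi>)"
definition Always_before :: "interval \<Rightarrow> 'a mform \<Rightarrow> 'a mform" where
  "Always_before I \<phi> = Trigger I Bot \<phi>"
definition Eventually_before :: "interval \<Rightarrow> 'a mform \<Rightarrow> 'a mform" where
  "Eventually_before I \<phi> = Since I Top \<phi>"
definition Weak_prev :: "interval \<Rightarrow> 'a mform \<Rightarrow> 'a mform" where
  "Weak_prev I \<phi> = Disj (Prev I \<phi>) (Neg (Prev I Top))"
definition Always :: "interval \<Rightarrow> 'a mform \<Rightarrow> 'a mform" where
  "Always I \<phi> = Release I Bot \<phi>"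
definition Eventually :: "interval \<Rightarrow> 'a mform \<Rightarrow> 'a mform" where
  "Eventually I \<phi> = Until I Top \<phi>"
definition Weak_next :: "interval \<Rightarrow> 'a mform \<Rightarrow> 'a mform" where
  "Weak_next I \<phi> = Disj (Next I \<phi>) (Neg (Next I Top))"

fun BigOr :: "'a mform list \<Rightarrow> 'a mform" where
  "BigOr [] = Bot"
| "BigOr [\<phi>] = \<phi>"
| "BigOr (\<phi> # \<psi>s) = Disj \<phi> (BigOr \<psi>s)"

fun BigAnd :: "'a mform list \<Rightarrow> 'a mform" where
  "BigAnd [] = Top"
| "BigAnd [\<phi>] = \<phi>"
| "BigAnd (\<phi> # \<psi>s) = Conj \<phi> (BigAnd \<psi>s)"

primrec sat :: "(nat \<Rightarrow> 'a set) \<Rightarrow> (nat \<Rightarrow> 'a set) \<Rightarrow> (nat \<Rightarrow> nat) \<Rightarrow> enat \<Rightarrow> nat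
                 \<Rightarrow> 'a mform \<Rightarrow> bool" where
  "sat H T \<tau> lam k (Atom p) = (p \<in> H k)"
| "sat H T \<tau> lam k Bot = False"
| "sat H T \<tau> lam k (Impl \<phi> \<psi>) =
     ((\<not> sat H T \<tau> lam k \<phi> \<or> sat H T \<tau> lam k \<psi>) \<and>
      (\<not> sat T T \<tau> lam k \<phi> \<or> sat T T \<tau> lam k \<psi>))"
| "sat H T \<tau> lam k (Conj \<phi> \<psi>) = (sat H T \<tau> lam k \<phi> \<and> sat H T \<tau> lam k \<psi>)"
| "sat H T \<tau> lam k (Disj \<phi> \<psi>) = (sat H T \<tau> lam k \<phi> \<or> sat H T \<tau> lam k \<psi>)"
| "sat H T \<tau> lam k (Prev I \<phi>) =
     (0 < k \<and> sat H T \<tau> lam (k - 1) \<phi> \<and> in_int (\<tau> k - \<tau> (k - 1)) I)"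
| "sat H T \<tau> lam k (Since I \<phi> \<psi>) =
     (\<exists>j\<le>k. in_int (\<tau> k - \<tau> j) I \<and> sat H T \<tau> lam j \<psi> \<and>
        (\<forall>i. j < i \<and> i \<le> k \<longrightarrow> sat H T \<tau> lam i \<phi>))"
| "sat H T \<tau> lam k (Trigger I \<phi> \<psi>) =
     (\<forall>j\<le>k. in_int (\<tau> k - \<tau> j) I \<longrightarrow> sat H T \<tau> lam j \<psi> \<or>
        (\<exists>i. j < i \<and> i \<le> k \<and> sat H T \<tau> lam i \<phi>))"
| "sat H T \<tau> lam k (Next I \<phi>) =
     (enat (Suc k) < lam \<and> sat H T \<tau> lam (Suc k) \<phi> \<and> in_int (\<tau> (Suc k) - \<tau> k) I)"
| "sat H T \<tau> lam k (Until I \<phi> \<psi>) =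
     (\<exists>j. k \<le> j \<and> enat j < lam \<and> in_int (\<tau> j - \<tau> k) I \<and> sat H T \<tau> lam j \<psi> \<and>
        (\<forall>i. k \<le> i \<and> i < j \<longrightarrow> sat H T \<tau> lam i \<phi>))"
| "sat H T \<tau> lam k (Release I \<phi> \<psi>) =
     (\<forall>j. k \<le> j \<and> enat j < lam \<and> in_int (\<tau> j - \<tau> k) I \<longrightarrow> sat H T \<tau> lam j \<psi> \<or>
        (\<exists>i. k \<le> i \<and> i < j \<and> sat H T \<tau> lam i \<phi>))"

definition strict_timed_ht_trace ::
  "(nat \<Rightarrow> 'a set) \<Rightarrow> (nat \<Rightarrow> 'a set) \<Rightarrow> (nat \<Rightarrow> nat) \<Rightarrow> enat \<Rightarrow> bool" where
  "strict_timed_ht_trace H T \<tau> lam \<longleftrightarrow>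
     (\<forall>i. enat i < lam \<longrightarrow> H i \<subseteq> T i) \<and> \<tau> 0 = 0 \<and>
     (\<forall>i. enat (Suc i) < lam \<longrightarrow> \<tau> i < \<tau> (Suc i))"

definition mequiv :: "'a mform \<Rightarrow> 'a mform \<Rightarrow> bool" (infix "\<equiv>\<^sub>M" 50) where
  "\<phi> \<equiv>\<^sub>M \<psi> \<longleftrightarrow> (\<forall>H T \<tau> lam k. strict_timed_ht_trace H T \<tau> lam \<and> enat k < lam \<longrightarrow>
                     sat H T \<tau> lam k (Iff \<phi> \<psi>))"

end

theory Submission
  imports Defs
begin

(* On a strict trace every step takes at least one time unit and time stamps are monotone.
   Hence a witness of Until/Since with the point interval [n,n] lies strictly beyond k, and
   the first step from k takes some time d with 1 \<le> d \<le> n, after which exactly n - d units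
   remain: this is the unfolding law for the point-interval until and since.  Release and
   Trigger need no separate argument: for a fixed interpretation they are the classical
   negations of Until and Since applied to the negated subformulas, and Eventually, Always
   and their past counterparts are the instances with Top and Bot. *)

definition strict_timestamps :: "(nat \<Rightarrow> nat) \<Rightarrow> enat \<Rightarrow> bool" where
  "strict_timestamps \<tau> lam \<longleftrightarrow> (\<forall>i. enat (Suc i) < lam \<longrightarrow> \<tau> i < \<tau> (Suc i))"

lemma strict_timestampsD:
  "strict_timestamps \<tau> lam \<Longrightarrow> enat (Suc i) < lam \<Longrightarrow> \<tau> i < \<tau> (Suc i)"
  unfolding strict_timestamps_def by blast

lemma strict_timestamps_mono:
  assumes strict: "strict_timestamps \<tau> lam" and "i \<le> j" and "enat j < lam"
  shows "\<tau> i \<le> \<tau> j"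
  using \<open>i \<le> j\<close> \<open>enat j < lam\<close>
proof (induction j rule: dec_induct)
  case (step m)
  then have "\<tau> i \<le> \<tau> m" by (meson enat_ord_simps(2) lessI less_trans)
  also have "\<tau> m < \<tau> (Suc m)" using strict_timestampsD[OF strict step.prems] .
  finally show ?case by simp
qed simp

lemma strict_timestamps_diff_split:
  assumes "strict_timestamps \<tau> lam" and "i \<le> m" "m \<le> j" "enat j < lam"
  shows "\<tau> j - \<tau> i = (\<tau> j - \<tau> m) + (\<tau> m - \<tau> i)"
  using strict_timestamps_mono[OF assms(1)] assms(2-4)
  by (metis add.commute enat_ord_simps(1) le_add_diff_inverse2 le_less_trans diff_add_assoc2)

definition until_at ::
    "(nat \<Rightarrow> nat) \<Rightarrow> enat \<Rightarrow> nat \<Rightarrow> (nat \<Rightarrow> bool) \<Rightarrow> (nat \<Rightarrow> bool) \<Rightarrow> nat \<Rightarrow> bool" where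
  "until_at \<tau> lam n P Q k \<longleftrightarrow>
     (\<exists>j. k \<le> j \<and> enat j < lam \<and> \<tau> j - \<tau> k = n \<and> Q j \<and> (\<forall>i. k \<le> i \<and> i < j \<longrightarrow> P i))"

definition since_at ::
    "(nat \<Rightarrow> nat) \<Rightarrow> nat \<Rightarrow> (nat \<Rightarrow> bool) \<Rightarrow> (nat \<Rightarrow> bool) \<Rightarrow> nat \<Rightarrow> bool" where
  "since_at \<tau> n P Q k \<longleftrightarrow>
     (\<exists>j\<le>k. \<tau> k - \<tau> j = n \<and> Q j \<and> (\<forall>i. j < i \<and> i \<le> k \<longrightarrow> P i))"

lemma until_at_unfold:
  assumes strict: "strict_timestamps \<tau> lam" and "0 < n"
  shows "until_at \<tau> lam n P Q k \<longleftrightarrow>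
    P k \<and> (\<exists>d\<in>{1..n}. enat (Suc k) < lam \<and> \<tau> (Suc k) - \<tau> k = d \<and>
      until_at \<tau> lam (n - d) P Q (Suc k))"
proof
  assume "until_at \<tau> lam n P Q k"
  then obtain j where j: "k \<le> j" "enat j < lam" "\<tau> j - \<tau> k = n" "Q j"
    and P: "\<forall>i. k \<le> i \<and> i < j \<longrightarrow> P i"
    unfolding until_at_def by blast
  have "j \<noteq> k" using j(3) \<open>0 < n\<close> by auto
  with j(1) have "Suc k \<le> j" by simp
  with j(2) have Suc_k: "enat (Suc k) < lam" by (meson enat_ord_simps(1) le_less_trans)
  define d where "d = \<tau> (Suc k) - \<tau> k"
  have "1 \<le> d" using strict_timestampsD[OF strict Suc_k] by (simp add: d_def)
  moreover have "n = (\<tau> j - \<tau> (Suc k)) + d"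
    using strict_timestamps_diff_split[OF strict le_SucI[OF order_refl] \<open>Suc k \<le> j\<close> j(2)] j(3)
    unfolding d_def by linarith
  ultimately have "d \<in> {1..n}" and "\<tau> j - \<tau> (Suc k) = n - d" by simp_all
  moreover have "until_at \<tau> lam (n - d) P Q (Suc k)"
    unfolding until_at_def using \<open>Suc k \<le> j\<close> j(2,4) P \<open>\<tau> j - \<tau> (Suc k) = n - d\<close> by auto
  ultimately show "P k \<and> (\<exists>d\<in>{1..n}. enat (Suc k) < lam \<and> \<tau> (Suc k) - \<tau> k = d \<and>
      until_at \<tau> lam (n - d) P Q (Suc k))"
    using P \<open>Suc k \<le> j\<close> Suc_k d_def by auto
next
  assume "P k \<and> (\<exists>d\<in>{1..n}. enat (Suc k) < lam \<and> \<tau> (Suc k) - \<tau> k = d \<and>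
    until_at \<tau> lam (n - d) P Q (Suc k))"
  then obtain d j where "P k" "d \<in> {1..n}" "\<tau> (Suc k) - \<tau> k = d"
    and j: "Suc k \<le> j" "enat j < lam" "\<tau> j - \<tau> (Suc k) = n - d" "Q j"
    and P: "\<forall>i. Suc k \<le> i \<and> i < j \<longrightarrow> P i"
    unfolding until_at_def by blast
  have "\<tau> j - \<tau> k = n"
    using strict_timestamps_diff_split[OF strict le_SucI[OF order_refl] j(1,2)] j(3)
      \<open>d \<in> {1..n}\<close> \<open>\<tau> (Suc k) - \<tau> k = d\<close>
    by simp
  moreover have "\<forall>i. k \<le> i \<and> i < j \<longrightarrow> P i"
    using P \<open>P k\<close> by (metis Suc_leI le_neq_implies_less)
  moreover have "k \<le> j" using j(1) by simp
  ultimately show "until_at \<tau> lam n P Q k"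
    unfolding until_at_def using j(2,4) by blast
qed

lemma since_at_unfold:
  assumes strict: "strict_timestamps \<tau> lam" and "enat k < lam" and "0 < n"
  shows "since_at \<tau> n P Q k \<longleftrightarrow>
    P k \<and> (\<exists>d\<in>{1..n}. 0 < k \<and> \<tau> k - \<tau> (k - 1) = d \<and>
      since_at \<tau> (n - d) P Q (k - 1))"
proof
  assume "since_at \<tau> n P Q k"
  then obtain j where j: "j \<le> k" "\<tau> k - \<tau> j = n" "Q j"
    and P: "\<forall>i. j < i \<and> i \<le> k \<longrightarrow> P i"
    unfolding since_at_def by blast
  have "j \<noteq> k" using j(2) \<open>0 < n\<close> by auto
  with j(1) obtain m where k: "k = Suc m" and "j \<le> m"
    by (metis le_SucE less_imp_Suc_add le_add1 le_neq_implies_less)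
  define d where "d = \<tau> k - \<tau> m"
  have "1 \<le> d" using strict_timestampsD[OF strict, of m] \<open>enat k < lam\<close> by (simp add: d_def k)
  moreover have "n = (\<tau> m - \<tau> j) + d"
    using strict_timestamps_diff_split[OF strict \<open>j \<le> m\<close> _ \<open>enat k < lam\<close>] j(2)
    unfolding d_def k by simp
  ultimately have "d \<in> {1..n}" and "\<tau> m - \<tau> j = n - d" by simp_all
  moreover have "since_at \<tau> (n - d) P Q m"
    unfolding since_at_def using \<open>j \<le> m\<close> j(3) P \<open>\<tau> m - \<tau> j = n - d\<close> k by auto
  ultimately show "P k \<and> (\<exists>d\<in>{1..n}. 0 < k \<and> \<tau> k - \<tau> (k - 1) = d \<and>
      since_at \<tau> (n - d) P Q (k - 1))"
    using P j(1) \<open>j \<noteq> k\<close> d_def k by auto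
next
  assume "P k \<and> (\<exists>d\<in>{1..n}. 0 < k \<and> \<tau> k - \<tau> (k - 1) = d \<and>
    since_at \<tau> (n - d) P Q (k - 1))"
  then obtain d m j where "P k" "d \<in> {1..n}" and k: "k = Suc m" and "\<tau> k - \<tau> m = d"
    and j: "j \<le> m" "\<tau> m - \<tau> j = n - d" "Q j"
    and P: "\<forall>i. j < i \<and> i \<le> m \<longrightarrow> P i"
    unfolding since_at_def by (metis Suc_pred')
  have "\<tau> k - \<tau> j = n"
    using strict_timestamps_diff_split[OF strict j(1) _ \<open>enat k < lam\<close>] j(2)
      \<open>d \<in> {1..n}\<close> \<open>\<tau> k - \<tau> m = d\<close> k
    by simp
  moreover have "\<forall>i. j < i \<and> i \<le> k \<longrightarrow> P i"
    using P \<open>P k\<close> k by (metis le_SucE)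
  moreover have "j \<le> k" using j(1) k by simp
  ultimately show "since_at \<tau> n P Q k"
    unfolding since_at_def using j(3) by blast
qed

lemma in_int_pt [simp]: "in_int d (pt n) \<longleftrightarrow> d = n"
  by (auto simp: in_int_def pt_def)

lemma sat_Top [simp]: "sat X Y \<tau> lam k Top"
  by (simp add: Top_def Neg_def)

lemma sat_Weak_next [simp]:
  "sat X Y \<tau> lam k (Weak_next I \<phi>) \<longleftrightarrow>
     (enat (Suc k) < lam \<and> in_int (\<tau> (Suc k) - \<tau> k) I \<longrightarrow> sat X Y \<tau> lam (Suc k) \<phi>)"
  by (auto simp: Weak_next_def Neg_def)

lemma sat_Weak_prev [simp]:
  "sat X Y \<tau> lam k (Weak_prev I \<phi>) \<longleftrightarrow>
     (0 < k \<and> in_int (\<tau> k - \<tau> (k - 1)) I \<longrightarrow> sat X Y \<tau> lam (k - 1) \<phi>)"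
  by (auto simp: Weak_prev_def Neg_def)

lemma sat_BigOr_map:
  "xs \<noteq> [] \<Longrightarrow> sat X Y \<tau> lam k (BigOr (map f xs)) \<longleftrightarrow> (\<exists>x\<in>set xs. sat X Y \<tau> lam k (f x))"
  by (induction xs rule: induct_list012) auto

lemma sat_BigAnd_map:
  "xs \<noteq> [] \<Longrightarrow> sat X Y \<tau> lam k (BigAnd (map f xs)) \<longleftrightarrow> (\<forall>x\<in>set xs. sat X Y \<tau> lam k (f x))"
  by (induction xs rule: induct_list012) auto

lemma sat_Until_pt:
  "sat X Y \<tau> lam k (Until (pt n) \<psi> \<phi>) \<longleftrightarrow>
     until_at \<tau> lam n (\<lambda>i. sat X Y \<tau> lam i \<psi>) (\<lambda>j. sat X Y \<tau> lam j \<phi>) k"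
  by (simp add: until_at_def)

lemma sat_Release_pt:
  "sat X Y \<tau> lam k (Release (pt n) \<psi> \<phi>) \<longleftrightarrow>
     \<not> until_at \<tau> lam n (\<lambda>i. \<not> sat X Y \<tau> lam i \<psi>) (\<lambda>j. \<not> sat X Y \<tau> lam j \<phi>) k"
  by (auto simp: until_at_def)

lemma sat_Since_pt:
  "sat X Y \<tau> lam k (Since (pt n) \<psi> \<phi>) \<longleftrightarrow>
     since_at \<tau> n (\<lambda>i. sat X Y \<tau> lam i \<psi>) (\<lambda>j. sat X Y \<tau> lam j \<phi>) k"
  by (simp add: since_at_def)

lemma sat_Trigger_pt:
  "sat X Y \<tau> lam k (Trigger (pt n) \<psi> \<phi>) \<longleftrightarrow>
     \<not> since_at \<tau> n (\<lambda>i. \<not> sat X Y \<tau> lam i \<psi>) (\<lambda>j. \<not> sat X Y \<tau> lam j \<phi>) k"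
  by (auto simp: since_at_def)

lemma sat_Until_pt_unfold:
  assumes "strict_timestamps \<tau> lam" and "0 < n"
  shows "sat X Y \<tau> lam k (Until (pt n) \<psi> \<phi>) \<longleftrightarrow>
    sat X Y \<tau> lam k \<psi> \<and> (\<exists>i\<in>{1..n}. sat X Y \<tau> lam k (Next (pt i) (Until (pt (n - i)) \<psi> \<phi>)))"
  unfolding sat.simps(9) sat_Until_pt until_at_unfold[OF assms] by auto

lemma sat_Release_pt_unfold:
  assumes "strict_timestamps \<tau> lam" and "0 < n"
  shows "sat X Y \<tau> lam k (Release (pt n) \<psi> \<phi>) \<longleftrightarrow>
    sat X Y \<tau> lam k \<psi> \<or> (\<forall>i\<in>{1..n}. sat X Y \<tau> lam k (Weak_next (pt i) (Release (pt (n - i)) \<psi> \<phi>)))"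
  unfolding sat_Weak_next sat_Release_pt until_at_unfold[OF assms] by auto

lemma sat_Since_pt_unfold:
  assumes "strict_timestamps \<tau> lam" and "enat k < lam" and "0 < n"
  shows "sat X Y \<tau> lam k (Since (pt n) \<psi> \<phi>) \<longleftrightarrow>
    sat X Y \<tau> lam k \<psi> \<and> (\<exists>i\<in>{1..n}. sat X Y \<tau> lam k (Prev (pt i) (Since (pt (n - i)) \<psi> \<phi>)))"
  unfolding sat.simps(6) sat_Since_pt since_at_unfold[OF assms] by auto

lemma sat_Trigger_pt_unfold:
  assumes "strict_timestamps \<tau> lam" and "enat k < lam" and "0 < n"
  shows "sat X Y \<tau> lam k (Trigger (pt n) \<psi> \<phi>) \<longleftrightarrow>
    sat X Y \<tau> lam k \<psi> \<or> (\<forall>i\<in>{1..n}. sat X Y \<tau> lam k (Weak_prev (pt i) (Trigger (pt (n - i)) \<psi> \<phi>)))"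
  unfolding sat_Weak_prev sat_Trigger_pt since_at_unfold[OF assms] by auto

lemma mequivI:
  assumes "\<And>X Y \<tau> lam k. strict_timestamps \<tau> lam \<Longrightarrow> enat k < lam \<Longrightarrow>
    sat X Y \<tau> lam k \<phi> \<longleftrightarrow> sat X Y \<tau> lam k \<psi>"
  shows "\<phi> \<equiv>\<^sub>M \<psi>"
  using assms unfolding mequiv_def Iff_def strict_timed_ht_trace_def strict_timestamps_def by auto

theorem lemma2:
  fixes \<psi> \<phi> :: "'a mform" and n :: nat
  assumes "0 < n"
  shows "Until (pt n) \<psi> \<phi> \<equiv>\<^sub>M
           Conj \<psi> (BigOr (map (\<lambda>i. Next (pt i) (Until (pt (n - i)) \<psi> \<phi>)) [1..<Suc n])) \<and>
         Release (pt n) \<psi> \<phi> \<equiv>\<^sub>M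
           Disj \<psi> (BigAnd (map (\<lambda>i. Weak_next (pt i) (Release (pt (n - i)) \<psi> \<phi>)) [1..<Suc n])) \<and>
         Eventually (pt n) \<phi> \<equiv>\<^sub>M
           BigOr (map (\<lambda>i. Next (pt i) (Eventually (pt (n - i)) \<phi>)) [1..<Suc n]) \<and>
         Always (pt n) \<phi> \<equiv>\<^sub>M
           BigAnd (map (\<lambda>i. Weak_next (pt i) (Always (pt (n - i)) \<phi>)) [1..<Suc n]) \<and>
         Since (pt n) \<psi> \<phi> \<equiv>\<^sub>M
           Conj \<psi> (BigOr (map (\<lambda>i. Prev (pt i) (Since (pt (n - i)) \<psi> \<phi>)) [1..<Suc n])) \<and>
         Trigger (pt n) \<psi> \<phi> \<equiv>\<^sub>M
           Disj \<psi> (BigAnd (map (\<lambda>i. Weak_prev (pt i) (Trigger (pt (n - i)) \<psi> \<phi>)) [1..<Suc n])) \<and>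
         Eventually_before (pt n) \<phi> \<equiv>\<^sub>M
           BigOr (map (\<lambda>i. Prev (pt i) (Eventually_before (pt (n - i)) \<phi>)) [1..<Suc n]) \<and>
         Always_before (pt n) \<phi> \<equiv>\<^sub>M
           BigAnd (map (\<lambda>i. Weak_prev (pt i) (Always_before (pt (n - i)) \<phi>)) [1..<Suc n])"
proof -
  have nonempty: "[1..<Suc n] \<noteq> []"
    using assms by simp
  note unfold_future = sat_Until_pt_unfold[OF _ assms] sat_Release_pt_unfold[OF _ assms]
  note unfold_past = sat_Since_pt_unfold[OF _ _ assms] sat_Trigger_pt_unfold[OF _ _ assms]
  show ?thesis
    by (intro conjI mequivI;
        simp only: Eventually_def Always_def Eventually_before_def Always_before_def
          unfold_future unfold_past sat_BigOr_map[OF nonempty] sat_BigAnd_map[OF nonempty]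
          set_upt atLeastLessThanSuc_atLeastAtMost sat_Top sat.simps(2,4,5) simp_thms)
qed

end
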